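(* Let $D=\{(x,y)\in\mathbb R^2:x^2+y^2\le1\}$ with the Euclidean metric. There is a sequence of $C^1$ diffeomorphisms $f_n\colon D\to D$ that does not converge to $\mathrm{id}_D$ in the $C^1$ topology but satisfies $\mathrm{d}_W(f_n,\mathrm{id}_D)\to0$ as $n\to\infty$.
   Context: $\mathrm{d}_{C^0}(f,g)=\max_{p}\|f(p)-g(p)\|+\max_p\|f^{-1}(p)-g^{-1}(p)\|$; $\mathrm{d}'_W(f,g)=\sup_{p\ne q}\frac{|\|f(p)-f(q)\|-\|g(p)-g(q)\||}{\|p-q\|}$; $\mathrm{d}_W(f,g)=\mathrm{d}_{C^0}(f,g)+\mathrm{d}'_W(f,g)+\mathrm{d}'_W(f^{-1},g^{-1})$. *)

theory Defs
  imports "HOL-Analysis.Analysis"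
begin

definition disk :: "(real^2) set" where
  "disk = cball 0 1"

definition C1_map :: "'a::real_normed_vector set \<Rightarrow> ('a \<Rightarrow> 'a) \<Rightarrow> ('a \<Rightarrow> 'a \<Rightarrow>\<^sub>L 'a) \<Rightarrow> bool" where
  "C1_map D f f' \<longleftrightarrow>
     (\<forall>p\<in>D. (f has_derivative blinfun_apply (f' p)) (at p within D)) \<and> continuous_on D f'"

definition C1_diffeo :: "'a::real_normed_vector set \<Rightarrow> ('a \<Rightarrow> 'a) \<Rightarrow> bool" where
  "C1_diffeo D f \<longleftrightarrow> bij_betw f D D \<and> (\<exists>f'. C1_map D f f') \<and> (\<exists>g'. C1_map D (inv_into D f) g')"

definition dC0 :: "'a::real_normed_vector set \<Rightarrow> ('a \<Rightarrow> 'a) \<Rightarrow> ('a \<Rightarrow> 'a) \<Rightarrow> real" where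
  "dC0 D f g = (SUP p\<in>D. norm (f p - g p)) + (SUP p\<in>D. norm (inv_into D f p - inv_into D g p))"

definition dW' :: "'a::real_normed_vector set \<Rightarrow> ('a \<Rightarrow> 'a) \<Rightarrow> ('a \<Rightarrow> 'a) \<Rightarrow> real" where
  "dW' D f g = (SUP pq\<in>{(p, q). p \<in> D \<and> q \<in> D \<and> p \<noteq> q}.
      \<bar>norm (f (fst pq) - f (snd pq)) - norm (g (fst pq) - g (snd pq))\<bar> / norm (fst pq - snd pq))"

definition dW :: "'a::real_normed_vector set \<Rightarrow> ('a \<Rightarrow> 'a) \<Rightarrow> ('a \<Rightarrow> 'a) \<Rightarrow> real" where
  "dW D f g = dC0 D f g + dW' D f g + dW' D (inv_into D f) (inv_into D g)"

end

theory Submission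
  imports Defs "HOL-Real_Asymp.Real_Asymp"
begin

(* Counterexample by twist maps.  The twist with profile phi rotates p by the angle
   phi(|p|^2); it preserves every circle about 0, so it is a bijection of the disk D whose
   inverse is the twist with profile -phi.  Its derivative is a rotation plus a rank-one
   term of relative size 2 |s phi'(s)|, s = |p|^2.  Hence, if e bounds this quantity on
   [0,1], the twist and its inverse are (1 + e)-Lipschitz on D (mean value inequality),
   and each of the two Lipschitz parts of d_W is at most e; the C^0 part is at most
   4 sup |phi(|p|^2)| |p|.  At the origin the derivative is the rotation by phi(0).
   For phi_n(s) = (1 + N s)^(-a), N = exp (m^2), a = 1/(2m), m = n + 1, one has
   phi_n(0) = 1, e = 1/m and |phi_n(|p|^2)| |p| <= exp (-m/2) on D, so
   d_W(f_n, id) <= 4 exp (-m/2) + 2/m -> 0, whereas every derivative at 0 is the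
   rotation by 1, at operator distance at least sin 1 from the identity. *)

section \<open>Planar rotations\<close>

definition J :: "real^2 \<Rightarrow> real^2" where
  "J p = vector [-(p$2), p$1]"

lemma J_component [simp]: "J p $ 1 = - (p$2)" "J p $ 2 = p$1"
  by (simp_all add: J_def)

lemma inner_real2: "(x::real^2) \<bullet> y = x$1*y$1 + x$2*y$2"
  by (simp add: inner_vec_def sum_2)

lemma bounded_linear_J: "bounded_linear J"
proof -
  have "linear J" by (rule linearI) (auto simp: vec_eq_iff forall_2)
  then show ?thesis using linear_conv_bounded_linear by blast
qed

lemma J_J [simp]: "J (J p) = - p"
  and J_scaleR [simp]: "J (c *\<^sub>R p) = c *\<^sub>R J p"
  and J_add [simp]: "J (p + q) = J p + J q"
  by (simp_all add: vec_eq_iff forall_2)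

lemma norm_J [simp]: "norm (J p) = norm p"
  by (simp add: norm_eq_sqrt_inner inner_real2 algebra_simps)

definition R :: "real \<Rightarrow> real^2 \<Rightarrow> real^2" where
  "R t p = cos t *\<^sub>R p + sin t *\<^sub>R J p"

text \<open>Since p and J p are orthogonal of equal length, a p + b J p has length
  sqrt (a^2 + b^2) |p|.\<close>
lemma norm_combination_J: "norm (a *\<^sub>R p + b *\<^sub>R J p) = sqrt (a^2 + b^2) * norm p"
proof -
  have "(a *\<^sub>R p + b *\<^sub>R J p) \<bullet> (a *\<^sub>R p + b *\<^sub>R J p) = (a^2+b^2) * (p \<bullet> p)"
    by (simp add: inner_real2 algebra_simps power2_eq_square)
  then show ?thesis
    by (simp add: norm_eq_sqrt_inner real_sqrt_mult)
qed

lemma norm_R [simp]: "norm (R t p) = norm p"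
  by (simp add: R_def norm_combination_J)

lemma R_inverse [simp]: "R (- t) (R t p) = p"
proof -
  have "R (- t) (R t p) = ((cos t)^2 + (sin t)^2) *\<^sub>R p"
    by (simp add: R_def algebra_simps power2_eq_square
        scaleR_add_left[symmetric] del: scaleR_add_left)
  then show ?thesis by simp
qed

lemma J_R: "J (R t p) = R t (J p)"
  by (simp add: R_def)

lemma bounded_linear_R: "bounded_linear (R t)"
  unfolding R_def
  by (intro bounded_linear_add bounded_linear_scaleR_right bounded_linear_ident
      bounded_linear_compose[OF bounded_linear_scaleR_right bounded_linear_J])

lemma norm_R_minus_id: "norm (R t p - p) \<le> 2 * \<bar>t\<bar> * norm p"
proof -
  have eq: "R t p - p = (cos t - 1) *\<^sub>R p + sin t *\<^sub>R J p"
    by (simp add: R_def algebra_simps)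
  have cos: "\<bar>cos t - 1\<bar> \<le> \<bar>t\<bar>"
  proof -
    have "\<bar>sin (t/2)\<bar> * \<bar>sin (t/2)\<bar> \<le> \<bar>t/2\<bar> * 1"
      using abs_sin_x_le_abs_x[of "t/2"] by (intro mult_mono) auto
    then show ?thesis
      using cos_double_sin[of "t/2"] by (simp add: power2_eq_square abs_mult[symmetric])
  qed
  have "norm (R t p - p) \<le> \<bar>cos t - 1\<bar> * norm p + \<bar>sin t\<bar> * norm (J p)"
    unfolding eq by (rule order_trans[OF norm_triangle_ineq]) simp
  also have "\<dots> \<le> \<bar>t\<bar> * norm p + \<bar>t\<bar> * norm p"
    unfolding norm_J using cos abs_sin_x_le_abs_x[of t]
    by (intro add_mono mult_right_mono) auto
  finally show ?thesis by simp
qed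

lemma sin_le_norm_R_minus_id: "\<bar>sin t\<bar> \<le> norm (Blinfun (R t) - id_blinfun)"
proof -
  define e :: "real^2" where "e = axis 1 1"
  have e: "norm e = 1" by (simp add: e_def)
  have "(Blinfun (R t) - id_blinfun) e = (cos t - 1) *\<^sub>R e + sin t *\<^sub>R J e"
    by (simp add: blinfun.diff_left bounded_linear_Blinfun_apply[OF bounded_linear_R]
        R_def algebra_simps)
  then have "norm ((Blinfun (R t) - id_blinfun) e) = sqrt ((cos t - 1)^2 + (sin t)^2)"
    by (simp add: norm_combination_J e)
  then have "\<bar>sin t\<bar> \<le> norm ((Blinfun (R t) - id_blinfun) e)"
    by (simp add: real_le_rsqrt)
  also have "\<dots> \<le> norm (Blinfun (R t) - id_blinfun)"
    using norm_blinfun[of "Blinfun (R t) - id_blinfun" e] e by simp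
  finally show ?thesis .
qed

section \<open>Twist maps\<close>

definition twist :: "(real \<Rightarrow> real) \<Rightarrow> real^2 \<Rightarrow> real^2" where
  "twist \<phi> p = R (\<phi> (p \<bullet> p)) p"

definition twist_deriv :: "(real \<Rightarrow> real) \<Rightarrow> (real \<Rightarrow> real) \<Rightarrow> real^2 \<Rightarrow> real^2 \<Rightarrow> real^2" where
  "twist_deriv \<phi> \<phi>' p v =
     R (\<phi> (p \<bullet> p)) v + (\<phi>' (p \<bullet> p) * (2 * (p \<bullet> v))) *\<^sub>R R (\<phi> (p \<bullet> p)) (J p)"

definition profile_deriv :: "(real \<Rightarrow> real) \<Rightarrow> (real \<Rightarrow> real) \<Rightarrow> bool" where
  "profile_deriv \<phi> \<phi>' \<longleftrightarrow> (\<forall>s\<ge>0. (\<phi> has_real_derivative \<phi>' s) (at s))"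

lemma profile_deriv_uminus:
  "profile_deriv \<phi> \<phi>' \<Longrightarrow> profile_deriv (\<lambda>s. - \<phi> s) (\<lambda>s. - \<phi>' s)"
  unfolding profile_deriv_def by (auto intro: derivative_intros)

lemma twist_has_derivative:
  assumes "profile_deriv \<phi> \<phi>'"
  shows "(twist \<phi> has_derivative twist_deriv \<phi> \<phi>' p) (at p)"
proof -
  have sq: "((\<lambda>p. p \<bullet> p) has_derivative (\<lambda>v. 2 * (p \<bullet> v))) (at p)"
    by (rule has_derivative_eq_rhs[OF has_derivative_inner[OF has_derivative_ident has_derivative_ident]])
       (simp add: fun_eq_iff inner_commute)
  have "(\<phi> has_real_derivative \<phi>' (p \<bullet> p)) (at (p \<bullet> p))"
    using assms unfolding profile_deriv_def by simp
  then have angle: "((\<lambda>p. \<phi> (p \<bullet> p)) has_derivative (\<lambda>v. \<phi>' (p \<bullet> p) * (2 * (p \<bullet> v)))) (at p)"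
    using has_derivative_compose[OF sq] by (simp add: has_field_derivative_def)
  have rot: "(J has_derivative J) (at p)"
    using bounded_linear_J by (rule bounded_linear_imp_has_derivative)
  show ?thesis
    unfolding twist_def R_def
    by (rule has_derivative_eq_rhs, (auto intro!: derivative_eq_intros angle rot)[1])
       (simp add: twist_deriv_def R_def fun_eq_iff algebra_simps)
qed

lemma norm_twist_deriv:
  "norm (twist_deriv \<phi> \<phi>' p v) \<le> (1 + 2 * \<bar>(p \<bullet> p) * \<phi>' (p \<bullet> p)\<bar>) * norm v"
proof -
  have "norm (twist_deriv \<phi> \<phi>' p v) \<le> norm v + \<bar>\<phi>' (p \<bullet> p) * (2 * (p \<bullet> v))\<bar> * norm p"
    unfolding twist_deriv_def
    by (rule order_trans[OF norm_triangle_ineq]) (simp add: J_R[symmetric])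
  also have "\<bar>\<phi>' (p \<bullet> p) * (2 * (p \<bullet> v))\<bar> * norm p = 2 * \<bar>\<phi>' (p \<bullet> p)\<bar> * \<bar>p \<bullet> v\<bar> * norm p"
    by (simp add: abs_mult)
  also have "\<dots> \<le> 2 * \<bar>\<phi>' (p \<bullet> p)\<bar> * (norm p * norm v) * norm p"
    using Cauchy_Schwarz_ineq2[of p v] by (intro mult_right_mono mult_left_mono) auto
  also have "\<dots> = 2 * \<bar>(p \<bullet> p) * \<phi>' (p \<bullet> p)\<bar> * norm v"
    by (simp add: abs_mult power2_norm_eq_inner[symmetric] power2_eq_square)
  finally show ?thesis by (simp add: algebra_simps)
qed

lemma twist_deriv_origin: "twist_deriv \<phi> \<phi>' 0 = R (\<phi> 0)"
  by (simp add: fun_eq_iff twist_deriv_def R_def)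

lemma twist_C1_map:
  assumes D: "profile_deriv \<phi> \<phi>'" and C: "continuous_on {0..} \<phi>'"
  shows "C1_map S (twist \<phi>) (\<lambda>p. Blinfun (twist_deriv \<phi> \<phi>' p))"
proof -
  have deriv: "(twist \<phi> has_derivative twist_deriv \<phi> \<phi>' p) (at p)" for p
    using D by (rule twist_has_derivative)
  have bl: "bounded_linear (twist_deriv \<phi> \<phi>' p)" for p
    using deriv by (rule has_derivative_bounded_linear)
  have "continuous_on {0..} \<phi>"
    using D unfolding profile_deriv_def
    by (intro continuous_at_imp_continuous_on) (auto intro: DERIV_isCont)
  then have angle: "continuous_on UNIV (\<lambda>p. \<phi> (p \<bullet> p))"
    by (rule continuous_on_compose2) (auto intro!: continuous_intros)
  have angle': "continuous_on UNIV (\<lambda>p. \<phi>' (p \<bullet> p))"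
    using C by (rule continuous_on_compose2) (auto intro!: continuous_intros)
  have rot: "continuous_on UNIV J"
    by (rule linear_continuous_on[OF bounded_linear_J])
  have "continuous_on UNIV (\<lambda>p. Blinfun (twist_deriv \<phi> \<phi>' p))"
  proof (rule continuous_on_blinfun_componentwise)
    fix v :: "real^2"
    show "continuous_on UNIV (\<lambda>p. blinfun_apply (Blinfun (twist_deriv \<phi> \<phi>' p)) v)"
      unfolding bounded_linear_Blinfun_apply[OF bl] twist_deriv_def R_def
      by (intro continuous_intros continuous_on_compose2[OF continuous_on_cos angle]
          continuous_on_compose2[OF continuous_on_sin angle] angle' rot)
         (auto simp: angle continuous_on_minus continuous_on_id)
  qed
  then show ?thesis
    unfolding C1_map_def bounded_linear_Blinfun_apply[OF bl]
    using deriv has_derivative_at_withinI continuous_on_subset by blast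
qed

lemma norm_twist [simp]: "norm (twist \<phi> p) = norm p"
  by (simp add: twist_def)

lemma inner_twist [simp]: "twist \<phi> p \<bullet> twist \<phi> p = p \<bullet> p"
  by (metis norm_twist power2_norm_eq_inner)

lemma twist_uminus_twist [simp]: "twist (\<lambda>s. - \<phi> s) (twist \<phi> p) = p"
  by (simp add: twist_def[of "\<lambda>s. - \<phi> s"]) (simp add: twist_def)

lemma twist_twist_uminus [simp]: "twist \<phi> (twist (\<lambda>s. - \<phi> s) p) = p"
  using twist_uminus_twist[of "\<lambda>s. - \<phi> s" p] by simp

lemma twist_in_disk: "p \<in> disk \<Longrightarrow> twist \<phi> p \<in> disk"
  by (simp add: disk_def)

lemma bij_betw_twist: "bij_betw (twist \<phi>) disk disk"
  by (rule bij_betw_byWitness[where f' = "twist (\<lambda>s. - \<phi> s)"]) (auto simp: twist_in_disk)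

lemma inv_into_twist: "q \<in> disk \<Longrightarrow> inv_into disk (twist \<phi>) q = twist (\<lambda>s. - \<phi> s) q"
  using bij_betw_twist[of \<phi>] twist_in_disk
  by (intro inv_into_f_eq) (auto simp: bij_betw_def)

lemma twist_C1_diffeo:
  assumes D: "profile_deriv \<phi> \<phi>'" and C: "continuous_on {0..} \<phi>'"
  shows "C1_diffeo disk (twist \<phi>)"
proof -
  have "C1_map disk (twist (\<lambda>s. - \<phi> s)) (\<lambda>p. Blinfun (twist_deriv (\<lambda>s. - \<phi> s) (\<lambda>s. - \<phi>' s) p))"
    using profile_deriv_uminus[OF D] continuous_on_minus[OF C] by (rule twist_C1_map)
  then have "C1_map disk (inv_into disk (twist \<phi>))
      (\<lambda>p. Blinfun (twist_deriv (\<lambda>s. - \<phi> s) (\<lambda>s. - \<phi>' s) p))"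
    unfolding C1_map_def by (auto intro: has_derivative_transform simp: inv_into_twist)
  then show ?thesis
    unfolding C1_diffeo_def using twist_C1_map[OF D C] bij_betw_twist by blast
qed

lemma twist_lipschitz:
  assumes D: "profile_deriv \<phi> \<phi>'"
    and B: "\<And>s. 0 \<le> s \<Longrightarrow> s \<le> 1 \<Longrightarrow> 2 * \<bar>s * \<phi>' s\<bar> \<le> e"
    and p: "p \<in> disk" and q: "q \<in> disk"
  shows "norm (twist \<phi> p - twist \<phi> q) \<le> (1 + e) * norm (p - q)"
proof (rule differentiable_bound[where f' = "twist_deriv \<phi> \<phi>'"])
  show "convex disk" by (simp add: disk_def)
  show "(twist \<phi> has_derivative twist_deriv \<phi> \<phi>' x) (at x within disk)" for x
    using twist_has_derivative[OF D] by (rule has_derivative_at_withinI)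
  show "onorm (twist_deriv \<phi> \<phi>' x) \<le> 1 + e" if x: "x \<in> disk" for x
  proof -
    have "0 \<le> x \<bullet> x" "x \<bullet> x \<le> 1"
      using x by (auto simp: disk_def power2_norm_eq_inner[symmetric] abs_square_le_1)
    then have e: "2 * \<bar>(x \<bullet> x) * \<phi>' (x \<bullet> x)\<bar> \<le> e" using B by blast
    show ?thesis
    proof (rule onorm_bound)
      show "0 \<le> 1 + e" using e by linarith
      show "norm (twist_deriv \<phi> \<phi>' x v) \<le> (1 + e) * norm v" for v
        using e by (intro order_trans[OF norm_twist_deriv] mult_right_mono) auto
    qed
  qed
qed (use p q in auto)

section \<open>Distances of a twist from the identity\<close>

lemma SUP_in_interval:
  fixes h :: "'a \<Rightarrow> real"
  assumes "A \<noteq> {}" "\<And>x. x \<in> A \<Longrightarrow> 0 \<le> h x \<and> h x \<le> B"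
  shows "0 \<le> (SUP x\<in>A. h x) \<and> (SUP x\<in>A. h x) \<le> B"
proof
  obtain x0 where x0: "x0 \<in> A" using assms(1) by blast
  have "bdd_above (h ` A)" using assms(2) by (intro bdd_aboveI2) blast
  then have "h x0 \<le> (SUP x\<in>A. h x)" by (rule cSUP_upper[OF x0])
  then show "0 \<le> (SUP x\<in>A. h x)" using assms(2) x0 by fastforce
  show "(SUP x\<in>A. h x) \<le> B" using assms by (intro cSUP_least) auto
qed

lemma relative_difference_le:
  fixes a d e :: real
  assumes "a \<le> (1 + e) * d" "d \<le> (1 + e) * a" "0 < d" "0 \<le> e"
  shows "\<bar>a - d\<bar> / d \<le> e"
proof -
  have "\<bar>a - d\<bar> \<le> e * d"
  proof (cases "d \<le> a")
    case True
    then show ?thesis using assms(1) by (simp add: algebra_simps)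
  next
    case False
    then have "e * a \<le> e * d" using assms(4) by (intro mult_left_mono) auto
    then show ?thesis using assms(2) False by (simp add: algebra_simps)
  qed
  then show ?thesis using assms by (simp add: divide_le_eq)
qed

text \<open>The Lipschitz part of the distance: a twist and its inverse are both
  (1 + e)-Lipschitz, so the twist distorts distances by a relative error at most e.\<close>
lemma dW'_twist_id:
  assumes D: "profile_deriv \<phi> \<phi>'"
    and B: "\<And>s. 0 \<le> s \<Longrightarrow> s \<le> 1 \<Longrightarrow> 2 * \<bar>s * \<phi>' s\<bar> \<le> e"
    and e: "0 \<le> e"
  shows "0 \<le> dW' disk (twist \<phi>) id \<and> dW' disk (twist \<phi>) id \<le> e"
  unfolding dW'_def
proof (rule SUP_in_interval)
  have "(0, axis 1 1) \<in> {(p, q). p \<in> disk \<and> q \<in> disk \<and> p \<noteq> q}"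
    by (auto simp: disk_def axis_eq_0_iff)
  then show "{(p, q). p \<in> disk \<and> q \<in> disk \<and> p \<noteq> q} \<noteq> {}" by blast
  fix pq assume "pq \<in> {(p, q). p \<in> disk \<and> q \<in> disk \<and> p \<noteq> q}"
  then obtain p q where pq: "pq = (p, q)" "p \<in> disk" "q \<in> disk" "p \<noteq> q" by blast
  have B': "\<And>s. 0 \<le> s \<Longrightarrow> s \<le> 1 \<Longrightarrow> 2 * \<bar>s * - \<phi>' s\<bar> \<le> e" using B by simp
  have "norm (twist \<phi> p - twist \<phi> q) \<le> (1 + e) * norm (p - q)"
    by (rule twist_lipschitz[OF D B pq(2,3)])
  moreover have "norm (p - q) \<le> (1 + e) * norm (twist \<phi> p - twist \<phi> q)"
    using twist_lipschitz[OF profile_deriv_uminus[OF D] B', of "twist \<phi> p" "twist \<phi> q"]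
    by (simp add: pq twist_in_disk)
  ultimately show "0 \<le> \<bar>norm (twist \<phi> (fst pq) - twist \<phi> (snd pq)) - norm (id (fst pq) - id (snd pq))\<bar>
        / norm (fst pq - snd pq) \<and>
      \<bar>norm (twist \<phi> (fst pq) - twist \<phi> (snd pq)) - norm (id (fst pq) - id (snd pq))\<bar>
        / norm (fst pq - snd pq) \<le> e"
    using relative_difference_le[OF _ _ _ e] pq by auto
qed

text \<open>The C^0 part of the distance: a twist moves p by at most \<open>2 |\<phi>(|p|^2)| |p|\<close>,
  and its inverse is the twist with profile \<open>-\<phi>\<close>.\<close>
lemma dC0_twist_id:
  assumes K: "\<And>p. p \<in> disk \<Longrightarrow> \<bar>\<phi> (p \<bullet> p)\<bar> * norm p \<le> k"
  shows "0 \<le> dC0 disk (twist \<phi>) id \<and> dC0 disk (twist \<phi>) id \<le> 4 * k"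
proof -
  have move: "norm (twist \<psi> p - p) \<le> 2 * k" if "p \<in> disk" "\<bar>\<psi> (p \<bullet> p)\<bar> = \<bar>\<phi> (p \<bullet> p)\<bar>"
    for \<psi> p
    using norm_R_minus_id[of "\<psi> (p \<bullet> p)" p] K[of p] that by (simp add: twist_def)
  have ne: "disk \<noteq> {}" by (auto simp: disk_def intro: exI[of _ 0])
  have "0 \<le> (SUP p\<in>disk. norm (twist \<phi> p - id p)) \<and> (SUP p\<in>disk. norm (twist \<phi> p - id p)) \<le> 2 * k"
    by (rule SUP_in_interval[OF ne]) (use move in auto)
  moreover have "0 \<le> (SUP p\<in>disk. norm (inv_into disk (twist \<phi>) p - inv_into disk id p)) \<and>
      (SUP p\<in>disk. norm (inv_into disk (twist \<phi>) p - inv_into disk id p)) \<le> 2 * k"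
    by (rule SUP_in_interval[OF ne]) (use move[of _ "\<lambda>s. - \<phi> s"] in \<open>auto simp: inv_into_twist\<close>)
  ultimately show ?thesis unfolding dC0_def by auto
qed

lemma dW_twist_id:
  assumes D: "profile_deriv \<phi> \<phi>'"
    and B: "\<And>s. 0 \<le> s \<Longrightarrow> s \<le> 1 \<Longrightarrow> 2 * \<bar>s * \<phi>' s\<bar> \<le> e" and e: "0 \<le> e"
    and K: "\<And>p. p \<in> disk \<Longrightarrow> \<bar>\<phi> (p \<bullet> p)\<bar> * norm p \<le> k"
  shows "0 \<le> dW disk (twist \<phi>) id \<and> dW disk (twist \<phi>) id \<le> 4 * k + 2 * e"
proof -
  have "dW' disk (inv_into disk (twist \<phi>)) (inv_into disk id) = dW' disk (twist (\<lambda>s. - \<phi> s)) id"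
    unfolding dW'_def by (rule SUP_cong) (auto simp: inv_into_twist)
  moreover have "0 \<le> dW' disk (twist (\<lambda>s. - \<phi> s)) id \<and> dW' disk (twist (\<lambda>s. - \<phi> s)) id \<le> e"
    using B by (intro dW'_twist_id[OF profile_deriv_uminus[OF D] _ e]) simp
  ultimately show ?thesis
    using dW'_twist_id[OF D B e] dC0_twist_id[OF K] unfolding dW_def by auto
qed

lemma norm_le_SUP_compact:
  fixes g :: "'a::topological_space \<Rightarrow> 'b::real_normed_vector"
  assumes "compact D" "continuous_on D g" "x \<in> D"
  shows "norm (g x) \<le> (SUP p\<in>D. norm (g p))"
proof (rule cSUP_upper[OF assms(3)])
  have "compact ((\<lambda>p. norm (g p)) ` D)"
    using assms(1,2) by (intro compact_continuous_image continuous_intros)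
  then show "bdd_above ((\<lambda>p. norm (g p)) ` D)"
    by (intro bounded_imp_bdd_above compact_imp_bounded)
qed

text \<open>The derivative of a twist stays at uniform distance at least \<open>|sin (\<phi> 0)|\<close> from
  the identity, witnessed at the origin.\<close>
lemma twist_deriv_far_from_id:
  assumes D: "profile_deriv \<phi> \<phi>'" and C: "continuous_on {0..} \<phi>'"
  shows "\<bar>sin (\<phi> 0)\<bar> \<le> (SUP p\<in>disk. norm (Blinfun (twist_deriv \<phi> \<phi>' p) - id_blinfun))"
proof -
  have "continuous_on disk (\<lambda>p. Blinfun (twist_deriv \<phi> \<phi>' p))"
    using twist_C1_map[OF D C] unfolding C1_map_def by blast
  then have "continuous_on disk (\<lambda>p. Blinfun (twist_deriv \<phi> \<phi>' p) - id_blinfun)"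
    by (intro continuous_intros)
  then have "norm (Blinfun (twist_deriv \<phi> \<phi>' 0) - id_blinfun)
      \<le> (SUP p\<in>disk. norm (Blinfun (twist_deriv \<phi> \<phi>' p) - id_blinfun))"
    by (intro norm_le_SUP_compact) (auto simp: disk_def)
  then show ?thesis
    using sin_le_norm_R_minus_id[of "\<phi> 0"] by (simp add: twist_deriv_origin)
qed

section \<open>The profiles\<close>

text \<open>The profile \<open>(1 + N s)^(-a)\<close> equals 1 at s = 0, decays to about \<open>N^(-a)\<close> at s = 1,
  and has logarithmic derivative \<open>|s \<phi>'(s) / \<phi>(s)| \<le> a\<close>.\<close>
definition profile :: "real \<Rightarrow> real \<Rightarrow> real \<Rightarrow> real" where
  "profile N a s = (1 + N * s) powr (- a)"

definition profile' :: "real \<Rightarrow> real \<Rightarrow> real \<Rightarrow> real" where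
  "profile' N a s = - a * N * (1 + N * s) powr (- a - 1)"

context
  fixes N a :: real
  assumes N: "0 < N" and a: "0 < a"
begin

lemma profile_base_pos: "0 \<le> s \<Longrightarrow> 0 < 1 + N * s"
  using N by (smt (verit) mult_nonneg_nonneg)

lemma profile_at_0: "profile N a 0 = 1"
  by (simp add: profile_def)

lemma profile_deriv_profile: "profile_deriv (profile N a) (profile' N a)"
  unfolding profile_deriv_def
proof (intro allI impI)
  fix s :: real assume "0 \<le> s"
  have "((\<lambda>s. 1 + N * s) has_real_derivative N) (at s)"
    by (auto intro!: derivative_eq_intros)
  from DERIV_fun_powr[OF this profile_base_pos[OF \<open>0 \<le> s\<close>], of "- a"]
  show "(profile N a has_real_derivative profile' N a s) (at s)"
    unfolding profile_def profile'_def by (simp add: algebra_simps)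
qed

lemma continuous_profile': "continuous_on {0..} (profile' N a)"
  unfolding profile'_def
  by (intro continuous_intros) (auto dest: profile_base_pos)

lemma profile'_bound: "0 \<le> s \<Longrightarrow> 2 * \<bar>s * profile' N a s\<bar> \<le> 2 * a"
proof -
  assume s: "0 \<le> s"
  define x where "x = 1 + N * s"
  have x: "1 \<le> x" using s N by (simp add: x_def)
  have "x powr (- a - 1) = x powr (- a) / x"
    using x by (simp add: powr_diff)
  then have eq: "\<bar>s * profile' N a s\<bar> = a * (x powr (- a) * (N * s / x))"
    unfolding profile'_def x_def[symmetric] using s N x a by (simp add: abs_mult)
  have "x powr (- a) \<le> 1"
    using x a by (simp add: powr_minus inverse_le_1_iff ge_one_powr_ge_zero)
  moreover have "N * s / x \<le> 1" using x by (simp add: x_def divide_le_eq)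
  ultimately have "a * (x powr (- a) * (N * s / x)) \<le> a * (1 * 1)"
    using s N x a by (intro mult_left_mono mult_mono) auto
  then show ?thesis using eq by simp
qed

text \<open>On the unit disk, \<open>|\<phi>(|p|^2)| |p| \<le> N^(-a)\<close>, using \<open>1 + N |p|^2 \<ge> N |p|^2\<close>.\<close>
lemma profile_displacement_bound:
  assumes a2: "a \<le> 1/2" and p: "norm p \<le> 1"
  shows "\<bar>profile N a (p \<bullet> p)\<bar> * norm p \<le> N powr (- a)"
proof (cases "p = 0")
  case True
  then show ?thesis by simp
next
  case False
  define r where "r = norm p"
  have r: "0 < r" "r \<le> 1" using False p by (auto simp: r_def)
  have pp: "p \<bullet> p = r powr 2" using r by (simp add: r_def power2_norm_eq_inner[symmetric])
  have "(1 + N * r powr 2) powr (- a) \<le> (N * r powr 2) powr (- a)"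
    using r N a by (intro powr_mono2') auto
  also have "\<dots> = N powr (- a) * r powr (- 2 * a)"
    using r N by (simp add: powr_mult powr_powr del: powr_numeral)
  finally have "\<bar>profile N a (p \<bullet> p)\<bar> * r \<le> N powr (- a) * (r powr (- 2 * a) * r)"
    using r unfolding profile_def pp mult.assoc[symmetric] by (intro mult_right_mono) auto
  also have "r powr (- 2 * a) * r = r powr (1 - 2 * a)"
    using r by (simp add: powr_diff powr_minus divide_inverse)
  also have "N powr (- a) * \<dots> \<le> N powr (- a) * 1"
    using r a2 by (intro mult_left_mono powr_le1) auto
  finally show ?thesis by (simp add: r_def)
qed

end

theorem mainTheorem16:
  shows "\<exists>(f :: nat \<Rightarrow> real^2 \<Rightarrow> real^2) f'.
     (\<forall>n. C1_diffeo disk (f n) \<and> C1_map disk (f n) (f' n)) \<and>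
     \<not> ((\<lambda>n. SUP p\<in>disk. norm (f n p - p)) \<longlonglongrightarrow> 0 \<and>
        (\<lambda>n. SUP p\<in>disk. norm (f' n p - id_blinfun)) \<longlonglongrightarrow> 0) \<and>
     (\<lambda>n. dW disk (f n) id) \<longlonglongrightarrow> 0"
proof -
  define N :: "nat \<Rightarrow> real" where "N n = exp ((real n + 1)^2)" for n
  define a :: "nat \<Rightarrow> real" where "a n = 1 / (2 * (real n + 1))" for n
  define \<phi> where "\<phi> n = profile (N n) (a n)" for n
  define \<phi>' where "\<phi>' n = profile' (N n) (a n)" for n
  have N: "0 < N n" and a: "0 < a n" "a n \<le> 1/2" for n
    by (auto simp: N_def a_def field_simps)
  have D: "profile_deriv (\<phi> n) (\<phi>' n)" and C: "continuous_on {0..} (\<phi>' n)" for n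
    unfolding \<phi>_def \<phi>'_def using profile_deriv_profile continuous_profile' N a by blast+
  have far: "sin 1 \<le> (SUP p\<in>disk. norm (Blinfun (twist_deriv (\<phi> n) (\<phi>' n) p) - id_blinfun))" for n
    using twist_deriv_far_from_id[OF D C, of n] profile_at_0[OF N a(1)] by (simp add: \<phi>_def)
  have dW: "0 \<le> dW disk (twist (\<phi> n)) id \<and>
      dW disk (twist (\<phi> n)) id \<le> 4 * N n powr (- a n) + 2 * (2 * a n)" for n
    using profile'_bound[OF N a(1)] profile_displacement_bound[OF N a]
    by (intro dW_twist_id[OF D]) (auto simp: \<phi>_def \<phi>'_def disk_def less_imp_le[OF a(1)])
  have bound_lim: "(\<lambda>n. 4 * N n powr (- a n) + 2 * (2 * a n)) \<longlonglongrightarrow> 0"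
    unfolding N_def a_def by real_asymp
  have "(\<lambda>n. dW disk (twist (\<phi> n)) id) \<longlonglongrightarrow> 0"
    using dW by (intro tendsto_sandwich[OF _ _ tendsto_const bound_lim]) auto
  moreover have "\<not> (\<lambda>n. SUP p\<in>disk. norm (Blinfun (twist_deriv (\<phi> n) (\<phi>' n) p) - id_blinfun)) \<longlonglongrightarrow> 0"
    using tendsto_lowerbound[OF _ always_eventually[OF allI[OF far]]] sin_gt_zero[of 1] pi_gt3
    by fastforce
  ultimately show ?thesis
    using twist_C1_diffeo[OF D C] twist_C1_map[OF D C]
    by (intro exI[of _ "\<lambda>n. twist (\<phi> n)"] exI[of _ "\<lambda>n p. Blinfun (twist_deriv (\<phi> n) (\<phi>' n) p)"])
      auto
qed

end
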